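(* Let $\alpha>2$, $\lambda_e>0$, $0<\epsilon<1$, and $K_1=\pi\lambda_e\Gamma(1+\frac{2}{\alpha})\Gamma(1-\frac{2}{\alpha})$. Consider a network of $N_L$ legitimate nodes including a source $S$ and a destination $D$, in which each link $l$ between two nodes has a length $|D_l|>0$, and let $L_{SD}$ be the set of all paths (sequences of links through distinct nodes) from $S$ to $D$; for $L\in L_{SD}$ let $|L|$ be its number of hops. Put $T=\frac{\ln\frac{1}{1-\epsilon}}{K_1}$ and, for a path $L$ with $\sum_{l\in L}|D_l|^2<T$, $$M_t(L)=\frac{\alpha}{2|L|}\log_2\left(\frac{\ln\frac{1}{1-\epsilon}}{K_1\sum_{l\in L}|D_l|^2}\right),$$ with the convention $M_t(\varnothing)=-\infty$. Consider problem $\mathbf{P1}'$: maximize $M_t(L)$ over $L\in L_{SD}$ subject to $$\lambda_e<\frac{\ln\frac{1}{1-\epsilon}}{\pi\Gamma(1+\frac{2}{\alpha})\Gamma(1-\frac{2}{\alpha})\sum_{l\in L}|D_l|^2}$$ (equivalently $\sum_{l\in L}|D_l|^2<T$). For each $v\in\{1,\dots,N_L-1\}$ let $\tilde L_v$ be a minimizer of $\sum_{l\in L}|D_l|^2$ over all $L\in L_{SD}$ with $|L|\le v$ if this minimum exists and is strictly less than $T$, and $\tilde L_v=\varnothing$ otherwise. Then $\mathbf{P1}'$ is equivalent to problem $\mathbf{P2}$: $M_t(L^* )=\max_{1\le v\le N_L-1}M_t(\tilde L_v)$; that is, the optimal value of $\mathbf{P1}'$ equals $\max_{1\le v\le N_L-1}M_t(\tilde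 L_v)$ and a maximizing $\tilde L_v$ is an optimal path $L^*$ of $\mathbf{P1}'$.
   Context: Background: $M_t(L)$ is the secrecy rate $R_s^*/|L|$ of path $L$, where $R_s^*=\frac{\alpha}{2}\log_2\big(\ln\frac{1}{1-\epsilon}/(K_1\sum_{l\in L}|D_l|^2)\big)$ is the largest confidential-information rate for which the end-to-end secrecy outage probability $1-\exp[-K_1 2^{2R_s/\alpha}\sum_{l\in L}|D_l|^2]$ does not exceed $\epsilon$; the constraint in $\mathbf{P1}'$ is the requirement $R_s^*>0$. Here $\lambda_e$ is the density of the Poisson point process of eavesdroppers and $\alpha$ the path-loss exponent. *)

theory Defs
  imports "HOL-Analysis.Analysis"
begin

definition is_path :: "'a set \<Rightarrow> ('a \<times> 'a) set \<Rightarrow> 'a \<Rightarrow> 'a \<Rightarrow> 'a list \<Rightarrow> bool" where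
  "is_path V E S D p \<longleftrightarrow> p \<noteq> [] \<and> hd p = S \<and> last p = D \<and> distinct p \<and> set p \<subseteq> V \<and>
     (\<forall>i < length p - 1. (p ! i, p ! Suc i) \<in> E)"

definition hops :: "'a list \<Rightarrow> nat" where
  "hops p = length p - 1"

definition cost :: "('a \<times> 'a \<Rightarrow> real) \<Rightarrow> 'a list \<Rightarrow> real" where
  "cost dl p = (\<Sum>i < length p - 1. (dl (p ! i, p ! Suc i))\<^sup>2)"

definition K1 :: "real \<Rightarrow> real \<Rightarrow> real" where
  "K1 \<alpha> lam_e = pi * lam_e * Gamma (1 + 2 / \<alpha>) * Gamma (1 - 2 / \<alpha>)"

text \<open>Secrecy metric M_t; None plays the role of the empty path, with value -infinity.\<close>
definition Mt :: "real \<Rightarrow> real \<Rightarrow> real \<Rightarrow> ('a \<times> 'a \<Rightarrow> real) \<Rightarrow> 'a list option \<Rightarrow> ereal" where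
  "Mt \<alpha> \<epsilon> K dl L = (case L of None \<Rightarrow> - \<infinity>
     | Some p \<Rightarrow> ereal (\<alpha> / (2 * real (hops p)) * log 2 (ln (1 / (1 - \<epsilon>)) / (K * cost dl p))))"

end

theory Submission
  imports Defs
begin

text \<open>Every non-empty candidate Lt v is a feasible path, so the optimum of P1' is at least
  the best candidate. Conversely, let q be feasible with h hops. The minimum-cost path with at
  most h hops costs no more than q, so it is feasible and Lt h is such a path; it has at most
  h hops and cost at most that of q, and M_t decreases in both the hop count and the cost.
  So the supremum over feasible paths is the maximum over the finitely many candidates.\<close>

definition is_min_cost_path ::
    "'a set \<Rightarrow> ('a \<times> 'a) set \<Rightarrow> 'a \<Rightarrow> 'a \<Rightarrow> ('a \<times> 'a \<Rightarrow> real) \<Rightarrow> nat \<Rightarrow> 'a list \<Rightarrow> bool" where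
  "is_min_cost_path V E S D dl v p \<longleftrightarrow> is_path V E S D p \<and> hops p \<le> v \<and>
     (\<forall>q. is_path V E S D q \<and> hops q \<le> v \<longrightarrow> cost dl p \<le> cost dl q)"

lemma is_path_length_ge_2:
  assumes "is_path V E S D p" "S \<noteq> D"
  shows "2 \<le> length p"
proof -
  have "p \<noteq> []" "hd p = S" "last p = D"
    using assms(1) unfolding is_path_def by auto
  with assms(2) show ?thesis
    by (cases p) (auto simp: Suc_le_eq split: if_splits)
qed

lemma length_path_le_card:
  assumes "is_path V E S D p" "finite V"
  shows "length p \<le> card V"
proof -
  have "distinct p" "set p \<subseteq> V"
    using assms(1) unfolding is_path_def by auto
  then show ?thesis
    using assms(2) by (metis card_mono distinct_card)
qed

lemma hops_path_bounds:
  assumes "is_path V E S D p" "S \<noteq> D" "finite V"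
  shows "hops p \<in> {1..card V - 1}"
  using is_path_length_ge_2[OF assms(1,2)] length_path_le_card[OF assms(1,3)]
  unfolding hops_def by auto

lemma cost_path_pos:
  assumes "is_path V E S D p" "S \<noteq> D" "\<And>l. l \<in> E \<Longrightarrow> dl l > 0"
  shows "cost dl p > 0"
proof -
  have "0 \<in> {..<length p - 1}"
    using is_path_length_ge_2[OF assms(1,2)] by simp
  then have "{..<length p - 1} \<noteq> {}"
    by blast
  moreover have "(dl (p ! i, p ! Suc i))\<^sup>2 > 0" if "i < length p - 1" for i
    using assms(1,3) that unfolding is_path_def by fastforce
  ultimately show ?thesis
    unfolding cost_def by (intro sum_pos) auto
qed

lemma finite_paths:
  assumes "finite V"
  shows "finite {p. is_path V E S D p}"
proof (rule finite_subset[OF _ finite_lists_length_le[OF assms]])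
  show "{p. is_path V E S D p} \<subseteq> {xs. set xs \<subseteq> V \<and> length xs \<le> card V}"
    using length_path_le_card[OF _ assms] unfolding is_path_def by auto
qed

lemma ex_min_cost_path:
  assumes "finite V" "is_path V E S D q" "hops q \<le> v"
  obtains p where "is_min_cost_path V E S D dl v p"
proof -
  let ?P = "\<lambda>p. is_path V E S D p \<and> hops p \<le> v"
  have "finite {p. ?P p}"
    using finite_paths[OF assms(1)] by (rule rev_finite_subset) auto
  moreover have "{p. ?P p} \<noteq> {}"
    using assms(2,3) by auto
  ultimately obtain p where "is_arg_min (cost dl) (\<lambda>p. p \<in> {p. ?P p}) p"
    using ex_is_arg_min_if_finite by blast
  then show ?thesis
    by (intro that) (simp add: is_arg_min_linorder is_min_cost_path_def)
qed

lemma Gamma_one_plus_times_Gamma_one_minus_pos: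
  fixes x :: real
  assumes "\<bar>x\<bar> < 1"
  shows "Gamma (1 + x) * Gamma (1 - x) > 0"
proof -
  have "0 < 1 + x" "0 < 1 - x"
    using assms by linarith+
  then show ?thesis
    by (simp add: Gamma_real_pos)
qed

lemma K1_pos:
  assumes "\<alpha> > 2" "lam_e > 0"
  shows "K1 \<alpha> lam_e > 0"
proof -
  have "Gamma (1 + 2 / \<alpha>) * Gamma (1 - 2 / \<alpha>) > 0"
    using assms(1) by (intro Gamma_one_plus_times_Gamma_one_minus_pos) simp
  with assms(2) show ?thesis
    unfolding K1_def by (simp add: mult.assoc)
qed

lemma secrecy_constraint_iff:
  assumes "\<alpha> > 2" "lam_e > 0" "c > 0"
  shows "lam_e < L / (pi * Gamma (1 + 2 / \<alpha>) * Gamma (1 - 2 / \<alpha>) * c)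
     \<longleftrightarrow> c < L / K1 \<alpha> lam_e"
proof -
  have "Gamma (1 + 2 / \<alpha>) * Gamma (1 - 2 / \<alpha>) > 0"
    using assms(1) by (intro Gamma_one_plus_times_Gamma_one_minus_pos) simp
  with assms(2,3) show ?thesis
    by (simp add: K1_def pos_less_divide_eq mult_ac)
qed

lemma Mt_Some_antimono:
  assumes "\<alpha> > 0" "K > 0" "1 \<le> hops p" "hops p \<le> hops q"
    and "0 < cost dl p" "cost dl p \<le> cost dl q" "cost dl q < ln (1 / (1 - \<epsilon>)) / K"
  shows "Mt \<alpha> \<epsilon> K dl (Some q) \<le> Mt \<alpha> \<epsilon> K dl (Some p)"
proof -
  define L where "L = ln (1 / (1 - \<epsilon>))"
  have Kq: "0 < K * cost dl q" "K * cost dl q < L"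
    using assms(2,5-7) by (simp_all add: L_def pos_less_divide_eq mult.commute)
  have Kp: "0 < K * cost dl p"
    using assms(2,5) by simp
  have "1 < L / (K * cost dl q)"
    using Kq by simp
  then have log_pos: "0 < log 2 (L / (K * cost dl q))"
    by simp
  have "L / (K * cost dl q) \<le> L / (K * cost dl p)"
    using Kq Kp assms(2,6) by (intro frac_le) auto
  then have log_le: "log 2 (L / (K * cost dl q)) \<le> log 2 (L / (K * cost dl p))"
    using Kq Kp by simp
  have factor_le: "\<alpha> / (2 * real (hops q)) \<le> \<alpha> / (2 * real (hops p))"
    using assms(1,3,4) by (intro divide_left_mono) auto
  have "\<alpha> / (2 * real (hops q)) * log 2 (L / (K * cost dl q))
      \<le> \<alpha> / (2 * real (hops p)) * log 2 (L / (K * cost dl p))"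
    using log_pos assms(1) by (intro mult_mono[OF factor_le log_le]) simp_all
  then show ?thesis
    unfolding Mt_def L_def by (simp only: option.case ereal_less_eq)
qed

lemma min_cost_candidate_dominates:
  assumes "\<alpha> > 0" "K > 0" "finite V" "S \<noteq> D" "\<And>l. l \<in> E \<Longrightarrow> dl l > 0"
    and Lt_spec: "\<And>v. v \<in> {1..card V - 1} \<Longrightarrow>
      (case Lt v of
         Some p \<Rightarrow> is_min_cost_path V E S D dl v p \<and> cost dl p < ln (1 / (1 - \<epsilon>)) / K
       | None \<Rightarrow> \<not> (\<exists>p. is_min_cost_path V E S D dl v p \<and> cost dl p < ln (1 / (1 - \<epsilon>)) / K))"
    and q: "is_path V E S D q" "cost dl q < ln (1 / (1 - \<epsilon>)) / K"
  shows "Mt \<alpha> \<epsilon> K dl (Some q) \<le> Mt \<alpha> \<epsilon> K dl (Lt (hops q))"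
proof -
  define h where "h = hops q"
  have h: "h \<in> {1..card V - 1}"
    unfolding h_def using hops_path_bounds[OF q(1) assms(4,3)] .
  obtain p0 where p0: "is_min_cost_path V E S D dl h p0"
    using ex_min_cost_path[OF assms(3) q(1)] unfolding h_def by blast
  then have "cost dl p0 < ln (1 / (1 - \<epsilon>)) / K"
    using q unfolding is_min_cost_path_def h_def by fastforce
  then obtain p where p: "Lt h = Some p" "is_min_cost_path V E S D dl h p"
    using Lt_spec[OF h] p0 by (cases "Lt h") auto
  then have "is_path V E S D p" "hops p \<le> hops q" "cost dl p \<le> cost dl q"
    using q(1) unfolding is_min_cost_path_def h_def by auto
  then have "Mt \<alpha> \<epsilon> K dl (Some q) \<le> Mt \<alpha> \<epsilon> K dl (Some p)"
    using hops_path_bounds[OF _ assms(4,3)] cost_path_pos[OF _ assms(4,5)] assms(1,2) q(2)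
    by (intro Mt_Some_antimono) auto
  then show ?thesis
    using p(1) unfolding h_def by simp
qed

lemma SUP_eq_Max_if_dominated:
  fixes f :: "'b \<Rightarrow> 'c::complete_linorder" and g :: "'i \<Rightarrow> 'c"
  assumes "finite I" "I \<noteq> {}"
    and dominated: "\<And>q. q \<in> F \<Longrightarrow> \<exists>v\<in>I. f q \<le> g v"
    and attained: "\<And>v. v \<in> I \<Longrightarrow> g v = bot \<or> g v \<in> f ` F"
  shows "(SUP q\<in>F. f q) = (MAX v\<in>I. g v)"
proof (rule antisym)
  show "(SUP q\<in>F. f q) \<le> (MAX v\<in>I. g v)"
  proof (rule SUP_least)
    fix q assume "q \<in> F"
    then obtain v where "v \<in> I" "f q \<le> g v"
      using dominated by blast
    then show "f q \<le> (MAX v\<in>I. g v)"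
      using assms(1) by (meson Max_ge finite_imageI imageI order_trans)
  qed
next
  have "(MAX v\<in>I. g v) \<in> g ` I"
    using assms(1,2) by (intro Max_in) auto
  then obtain v where "v \<in> I" "(MAX v\<in>I. g v) = g v"
    by blast
  with attained[OF \<open>v \<in> I\<close>] show "(MAX v\<in>I. g v) \<le> (SUP q\<in>F. f q)"
    by (auto intro: SUP_upper)
qed

lemma hop_constrained_min_cost_paths_optimal:
  fixes V :: "'a set" and E :: "('a \<times> 'a) set" and S D :: 'a
    and dl :: "'a \<times> 'a \<Rightarrow> real" and \<alpha> \<epsilon> K :: real and Lt :: "nat \<Rightarrow> 'a list option"
  defines "F \<equiv> {p. is_path V E S D p \<and> cost dl p < ln (1 / (1 - \<epsilon>)) / K}"
    and "I \<equiv> {1..card V - 1}"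
  assumes "\<alpha> > 0" "K > 0" "finite V" "S \<in> V" "D \<in> V" "S \<noteq> D"
    and "\<And>l. l \<in> E \<Longrightarrow> dl l > 0"
    and Lt_spec: "\<And>v. v \<in> {1..card V - 1} \<Longrightarrow>
      (case Lt v of
         Some p \<Rightarrow> is_min_cost_path V E S D dl v p \<and> cost dl p < ln (1 / (1 - \<epsilon>)) / K
       | None \<Rightarrow> \<not> (\<exists>p. is_min_cost_path V E S D dl v p \<and> cost dl p < ln (1 / (1 - \<epsilon>)) / K))"
  shows "(SUP p\<in>F. Mt \<alpha> \<epsilon> K dl (Some p)) = (MAX v\<in>I. Mt \<alpha> \<epsilon> K dl (Lt v))"
    and "\<And>v p. v \<in> I \<Longrightarrow> Lt v = Some p \<Longrightarrow> p \<in> F"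
proof -
  let ?M = "\<lambda>L. Mt \<alpha> \<epsilon> K dl L"
  show candidate_feasible: "p \<in> F" if "v \<in> I" "Lt v = Some p" for v p
    using Lt_spec[of v] that unfolding F_def I_def is_min_cost_path_def by simp
  have "card {S, D} \<le> card V"
    using assms(5-7) by (intro card_mono) auto
  then have "finite I" "I \<noteq> {}"
    using assms(8) unfolding I_def by auto
  moreover have "\<exists>v\<in>I. ?M (Some q) \<le> ?M (Lt v)" if "q \<in> F" for q
  proof
    show "hops q \<in> I"
      using that hops_path_bounds[OF _ assms(8,5)] unfolding F_def I_def by blast
    show "?M (Some q) \<le> ?M (Lt (hops q))"
      using that unfolding F_def
      by (intro min_cost_candidate_dominates[OF assms(3,4,5,8,9) Lt_spec]) auto
  qed
  moreover have "?M (Lt v) = bot \<or> ?M (Lt v) \<in> (\<lambda>p. ?M (Some p)) ` F" if "v \<in> I" for v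
    using candidate_feasible[OF that] by (cases "Lt v") (auto simp: Mt_def bot_ereal_def)
  ultimately show "(SUP p\<in>F. ?M (Some p)) = (MAX v\<in>I. ?M (Lt v))"
    by (rule SUP_eq_Max_if_dominated)
qed

theorem theorem2:
  fixes V :: "'a set" and E :: "('a \<times> 'a) set" and S D :: 'a
    and dl :: "'a \<times> 'a \<Rightarrow> real" and \<alpha> lam_e \<epsilon> :: real
    and Lt :: "nat \<Rightarrow> 'a list option"
  assumes "\<alpha> > 2" and "lam_e > 0" and "0 < \<epsilon>" and "\<epsilon> < 1"
    and "finite V" and "S \<in> V" and "D \<in> V" and "S \<noteq> D"
    and "E \<subseteq> V \<times> V"
    and "\<And>l. l \<in> E \<Longrightarrow> dl l > 0"
    and Lt_def: "\<And>v. v \<in> {1..card V - 1} \<Longrightarrow>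
      (case Lt v of
         Some p \<Rightarrow> (is_path V E S D p \<and> hops p \<le> v \<and>
                    (\<forall>q. is_path V E S D q \<and> hops q \<le> v \<longrightarrow> cost dl p \<le> cost dl q)) \<and>
                   cost dl p < ln (1 / (1 - \<epsilon>)) / K1 \<alpha> lam_e
       | None \<Rightarrow> \<not> (\<exists>p. (is_path V E S D p \<and> hops p \<le> v \<and>
                    (\<forall>q. is_path V E S D q \<and> hops q \<le> v \<longrightarrow> cost dl p \<le> cost dl q)) \<and>
                   cost dl p < ln (1 / (1 - \<epsilon>)) / K1 \<alpha> lam_e))"
  shows "(SUP p \<in> {p. is_path V E S D p \<and>
            lam_e < ln (1 / (1 - \<epsilon>)) / (pi * Gamma (1 + 2 / \<alpha>) * Gamma (1 - 2 / \<alpha>) * cost dl p)}.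
            Mt \<alpha> \<epsilon> (K1 \<alpha> lam_e) dl (Some p))
         = (MAX v \<in> {1..card V - 1}. Mt \<alpha> \<epsilon> (K1 \<alpha> lam_e) dl (Lt v))
    \<and> (\<forall>v \<in> {1..card V - 1}. \<forall>p.
         Mt \<alpha> \<epsilon> (K1 \<alpha> lam_e) dl (Lt v) = (MAX w \<in> {1..card V - 1}. Mt \<alpha> \<epsilon> (K1 \<alpha> lam_e) dl (Lt w))
         \<and> Lt v = Some p \<longrightarrow>
           is_path V E S D p
         \<and> lam_e < ln (1 / (1 - \<epsilon>)) / (pi * Gamma (1 + 2 / \<alpha>) * Gamma (1 - 2 / \<alpha>) * cost dl p)
         \<and> (\<forall>q. is_path V E S D q \<and>
              lam_e < ln (1 / (1 - \<epsilon>)) / (pi * Gamma (1 + 2 / \<alpha>) * Gamma (1 - 2 / \<alpha>) * cost dl q)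
              \<longrightarrow> Mt \<alpha> \<epsilon> (K1 \<alpha> lam_e) dl (Some q) \<le> Mt \<alpha> \<epsilon> (K1 \<alpha> lam_e) dl (Some p)))"
proof -
  define T where "T = ln (1 / (1 - \<epsilon>)) / K1 \<alpha> lam_e"
  have constraint_iff: "lam_e < ln (1 / (1 - \<epsilon>)) /
        (pi * Gamma (1 + 2 / \<alpha>) * Gamma (1 - 2 / \<alpha>) * cost dl p) \<longleftrightarrow> cost dl p < T"
    if "is_path V E S D p" for p
    unfolding T_def
    using secrecy_constraint_iff[OF assms(1,2) cost_path_pos[OF that assms(8,10)]] .
  then have feasible_set: "{p. is_path V E S D p \<and> lam_e < ln (1 / (1 - \<epsilon>)) /
        (pi * Gamma (1 + 2 / \<alpha>) * Gamma (1 - 2 / \<alpha>) * cost dl p)}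
      = {p. is_path V E S D p \<and> cost dl p < T}"
    by auto
  have "\<alpha> > 0"
    using assms(1) by simp
  note optimal = hop_constrained_min_cost_paths_optimal[OF this K1_pos[OF assms(1,2)] assms(5-8,10)
      Lt_def[folded is_min_cost_path_def], folded T_def]
  show ?thesis
    unfolding feasible_set
    using optimal(1)[symmetric] optimal(2) constraint_iff by (auto intro: SUP_upper)
qed

end
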